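(* Let $\tau \ge 2$ be an integer and let $(X,\mathcal{B})$ be a $3$-$(v,k,1)$-design with $k \ge \tau(\tau-1)+1$. Let $\sigma = \tau k - \tau(\tau-1)$. Then the union of any $\tau$ distinct blocks contains at least $\sigma$ points and the union of any $\tau-1$ blocks contains at most $\sigma-1$ points; consequently, using a base $(\sigma,v)$-threshold scheme with this distribution design yields an expanded threshold scheme with threshold $\tau$.
   Context: A $t$-$(v,k,\lambda)$-design is a set $X$ of $v$ points together with a collection $\mathcal{B}$ of $k$-subsets of $X$ (blocks) such that every $t$-subset of $X$ lies in exactly $\lambda$ blocks. A distribution design $(X,\mathcal{B})$ with $|X|=m$, $|\mathcal{B}|=n$ combined with a base $(\sigma,m)$-threshold scheme gives each player (one per block) the subshares indexed by the points of its block; if the union of any $\tau$ blocks has at least $\sigma$ points and the union of any $\tau-1$ blocks has at most $\sigma-1$ points, the resulting expanded scheme is a $(\tau,n)$-threshold scheme. *)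

theory Defs
  imports Main
begin

text \<open>Blocks are modelled as a set of sets (for a 3-(v,k,1)-design with k \<ge> 3 blocks
  are necessarily distinct).\<close>
definition t_design :: "nat \<Rightarrow> nat \<Rightarrow> nat \<Rightarrow> nat \<Rightarrow> 'a set \<Rightarrow> 'a set set \<Rightarrow> bool" where
  "t_design t v k lam X B \<longleftrightarrow>
     finite X \<and> card X = v \<and>
     (\<forall>b\<in>B. b \<subseteq> X \<and> card b = k) \<and>
     (\<forall>T. T \<subseteq> X \<and> card T = t \<longrightarrow> card {b\<in>B. T \<subseteq> b} = lam)"

text \<open>Distribution design condition making the expanded scheme (from a base
  (sigma,m)-threshold scheme) a (tau,n)-threshold scheme: the union of any tau
  distinct blocks has at least sigma points, the union of any tau-1 blocks has at
  most sigma-1 points.\<close>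
definition threshold_distribution_design :: "'a set set \<Rightarrow> nat \<Rightarrow> nat \<Rightarrow> bool" where
  "threshold_distribution_design B \<tau> \<sigma> \<longleftrightarrow>
     (\<forall>S. S \<subseteq> B \<and> card S = \<tau> \<longrightarrow> card (\<Union>S) \<ge> \<sigma>) \<and>
     (\<forall>S. S \<subseteq> B \<and> card S = \<tau> - 1 \<longrightarrow> card (\<Union>S) \<le> \<sigma> - 1)"

end

theory Submission
  imports Defs
begin

text \<open>Three points of a 3-(v,k,1)-design lie in a unique block, so two distinct blocks share
  at most two points. Hence, adding the blocks of a \<tau>-subset one at a time, the i-th block
  contributes at least k - 2(i - 1) new points, and the union has at least
  \<tau>k - 2\<cdot>C(\<tau>,2) = \<sigma> points. On the other hand \<tau> - 1 blocks cover at most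
  (\<tau> - 1)k points, which is below \<sigma> exactly because k > \<tau>(\<tau> - 1).\<close>

lemma t_design_block_finite:
  assumes "t_design t v k lam X B" "b \<in> B"
  shows "finite b"
  using assms finite_subset unfolding t_design_def by blast

lemma t_design_card_Int_less:
  assumes "t_design t v k 1 X B" "b \<in> B" "c \<in> B" "b \<noteq> c"
  shows "card (b \<inter> c) < t"
proof (rule ccontr)
  assume "\<not> card (b \<inter> c) < t"
  then obtain T where T: "T \<subseteq> b \<inter> c" "card T = t"
    by (metis not_less obtain_subset_with_card_n)
  have "T \<subseteq> X"
    using T assms(1,2) unfolding t_design_def by blast
  then have unique: "card {d\<in>B. T \<subseteq> d} = 1"
    using assms(1) T(2) unfolding t_design_def by blast
  have "{b, c} \<subseteq> {d\<in>B. T \<subseteq> d}"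
    using T assms(2,3) by auto
  then have "card {b, c} \<le> 1"
    using unique card_mono by (metis One_nat_def card.infinite zero_neq_one)
  with \<open>b \<noteq> c\<close> show False by simp
qed

lemma card_Union_lower_bound:
  assumes "finite S"
    and "\<And>b. b \<in> S \<Longrightarrow> finite b \<and> card b = k"
    and "\<And>b c. b \<in> S \<Longrightarrow> c \<in> S \<Longrightarrow> b \<noteq> c \<Longrightarrow> card (b \<inter> c) \<le> m"
  shows "card S * k \<le> card (\<Union>S) + m * (card S choose 2)"
  using assms
proof (induction S rule: finite_induct)
  case empty
  then show ?case by simp
next
  case (insert b S)
  have IH: "card S * k \<le> card (\<Union>S) + m * (card S choose 2)"
    using insert by auto
  have b: "finite b" "card b = k"
    using insert.prems(1) by auto
  have "finite (\<Union>S)"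
    using insert by auto
  then have union: "card (b \<union> \<Union>S) + card (b \<inter> \<Union>S) = k + card (\<Union>S)"
    using card_Un_Int[OF b(1)] b(2) by simp
  have "card (b \<inter> \<Union>S) = card (\<Union>c\<in>S. b \<inter> c)"
    by (metis Int_Union)
  also have "\<dots> \<le> (\<Sum>c\<in>S. card (b \<inter> c))"
    using card_UN_le[OF insert.hyps(1)] by blast
  also have "\<dots> \<le> (\<Sum>c\<in>S. m)"
    using insert.hyps(2) insert.prems(2) by (intro sum_mono) auto
  finally have overlap: "card (b \<inter> \<Union>S) \<le> m * card S"
    by (simp add: mult.commute)
  have "Suc (card S) choose 2 = (card S choose 2) + card S"
    by (simp add: numeral_2_eq_2 choose_one)
  then show ?case
    using insert.hyps IH union overlap by (simp add: algebra_simps)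
qed

lemma card_Union_upper_bound:
  assumes "finite S" "\<And>b. b \<in> S \<Longrightarrow> card b = k"
  shows "card (\<Union>S) \<le> card S * k"
proof -
  have "card (\<Union>S) \<le> (\<Sum>b\<in>S. card b)"
    by (rule card_Union_le_sum_card)
  also have "\<dots> = card S * k"
    using assms(2) by simp
  finally show ?thesis .
qed

theorem mainTheorem6:
  fixes X :: "'a set" and B :: "'a set set" and v k \<tau> \<sigma> :: nat
  assumes "\<tau> \<ge> 2"
    and "t_design 3 v k 1 X B"
    and "k \<ge> \<tau> * (\<tau> - 1) + 1"
    and "\<sigma> = \<tau> * k - \<tau> * (\<tau> - 1)"
  shows "(\<forall>S. S \<subseteq> B \<and> card S = \<tau> \<longrightarrow> card (\<Union>S) \<ge> \<sigma>) \<and>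
         (\<forall>S. S \<subseteq> B \<and> card S = \<tau> - 1 \<longrightarrow> card (\<Union>S) \<le> \<sigma> - 1) \<and>
         threshold_distribution_design B \<tau> \<sigma>"
proof -
  have blocks: "finite b \<and> card b = k" if "b \<in> B" for b
    using t_design_block_finite[OF assms(2) that] assms(2) that unfolding t_design_def by blast
  have overlap: "card (b \<inter> c) \<le> 2" if "b \<in> B" "c \<in> B" "b \<noteq> c" for b c
    using t_design_card_Int_less[OF assms(2) that] by simp
  have pairs: "2 * (\<tau> choose 2) = \<tau> * (\<tau> - 1)"
    using times_binomial_minus1_eq[of 2 \<tau>] by (simp add: choose_one)
  have lower: "card (\<Union>S) \<ge> \<sigma>" if S: "S \<subseteq> B" "card S = \<tau>" for S
  proof -
    have "finite S"
      using S(2) assms(1) by (intro card_ge_0_finite) simp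
    then have "\<tau> * k \<le> card (\<Union>S) + 2 * (\<tau> choose 2)"
      using card_Union_lower_bound[of S k 2] S blocks overlap by (auto simp: subset_iff)
    then show ?thesis
      using pairs assms(4) by linarith
  qed
  have slack: "(\<tau> - 1) * k + \<tau> * (\<tau> - 1) < \<tau> * k"
    using assms(1,3) by (cases \<tau>) auto
  have upper: "card (\<Union>S) \<le> \<sigma> - 1" if S: "S \<subseteq> B" "card S = \<tau> - 1" for S
  proof -
    have "finite S"
      using S(2) assms(1) by (intro card_ge_0_finite) simp
    then have "card (\<Union>S) \<le> (\<tau> - 1) * k"
      using card_Union_upper_bound[of S k] S blocks by (auto simp: subset_iff)
    then show ?thesis
      using slack assms(4) by linarith
  qed
  show ?thesis
    using lower upper unfolding threshold_distribution_design_def by blast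
qed

end
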